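(* Let $1\le p\le q$. If $(p,q)$ does not satisfy $q=p\ge3$, then $\mathfrak{D}(K_{p,q})$ is unique: for every graph $G$ with no isolated vertices, $\mathfrak{D}(G)\cong\mathfrak{D}(K_{p,q})$ implies $G\cong K_{p,q}$. If $p=q\ge3$ and $G$ is a graph with no isolated vertices with $\mathfrak{D}(G)\cong\mathfrak{D}(K_{p,p})$, then $G\cong K_{p,p}$ or $G\cong K_p\,\Box\,K_2$ (and indeed $\mathfrak{D}(K_p\Box K_2)\cong\mathfrak{D}(K_{p,p})$).
   Context: All graphs are finite, simple, undirected. A set $S\subseteq V(G)$ is a dominating set if every vertex of $G$ is in $S$ or adjacent to a vertex of $S$. The domination TAR graph $\mathfrak{D}(G)$ has as vertices the dominating sets of $G$, with $S_1S_2$ an edge iff $|S_1\ominus S_2|=1$ (symmetric difference). $K_{p,q}$ is the complete bipartite graph with parts of sizes $p$ and $q$; $\Box$ is the Cartesian product. *)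

theory Defs
  imports Main
begin

definition simple_graph :: "'a set \<Rightarrow> 'a set set \<Rightarrow> bool" where
  "simple_graph V E \<longleftrightarrow> finite V \<and> (\<forall>e\<in>E. e \<subseteq> V \<and> card e = 2)"

definition no_isolated :: "'a set \<Rightarrow> 'a set set \<Rightarrow> bool" where
  "no_isolated V E \<longleftrightarrow> (\<forall>v\<in>V. \<exists>u. {u, v} \<in> E)"

definition graph_iso :: "'a set \<Rightarrow> 'a set set \<Rightarrow> 'b set \<Rightarrow> 'b set set \<Rightarrow> bool" where
  "graph_iso V1 E1 V2 E2 \<longleftrightarrow>
     (\<exists>f. bij_betw f V1 V2 \<and> (\<forall>u\<in>V1. \<forall>v\<in>V1. {u, v} \<in> E1 \<longleftrightarrow> {f u, f v} \<in> E2))"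

definition dominating :: "'a set \<Rightarrow> 'a set set \<Rightarrow> 'a set \<Rightarrow> bool" where
  "dominating V E S \<longleftrightarrow> S \<subseteq> V \<and> (\<forall>v\<in>V. v \<in> S \<or> (\<exists>u\<in>S. {u, v} \<in> E))"

definition tar_vertices :: "'a set \<Rightarrow> 'a set set \<Rightarrow> 'a set set" where
  "tar_vertices V E = {S. dominating V E S}"

definition tar_edges :: "'a set \<Rightarrow> 'a set set \<Rightarrow> 'a set set set" where
  "tar_edges V E = {{S1, S2} | S1 S2. dominating V E S1 \<and> dominating V E S2 \<and>
                        card ((S1 - S2) \<union> (S2 - S1)) = 1}"

definition Kbip_V :: "nat \<Rightarrow> nat \<Rightarrow> (bool \<times> nat) set" where
  "Kbip_V p q = {(False, i) | i. i < p} \<union> {(True, j) | j. j < q}"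

definition Kbip_E :: "nat \<Rightarrow> nat \<Rightarrow> (bool \<times> nat) set set" where
  "Kbip_E p q = {{(False, i), (True, j)} | i j. i < p \<and> j < q}"

definition Kprism_V :: "nat \<Rightarrow> (bool \<times> nat) set" where
  "Kprism_V p = {(b, i) | b i. i < p}"

definition Kprism_E :: "nat \<Rightarrow> (bool \<times> nat) set set" where
  "Kprism_E p = {{(b, i), (b, j)} | b i j. i < p \<and> j < p \<and> i \<noteq> j}
              \<union> {{(False, i), (True, i)} | i. i < p}"

end

theory Submission
  imports Defs
begin

text \<open>
  An isomorphism \<phi> of domination TAR graphs maps every TAR edge that adds a vertex v to an edge
  toggling one and the same vertex label v: two such edges are compared along 4-cycles of the TAR
  graph, by downward induction on the dominating set. Then label is a bijection with
  \<phi> S = label ` S, so it carries the dominating sets of one graph exactly onto those of the other.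
  The dominating sets of K_{p,q} are its two parts and the sets meeting both parts. A graph whose
  dominating sets are of this form for a partition A, B is either complete bipartite between A
  and B, or A and B are cliques joined by a perfect matching, i.e. the graph is K_p \<box> K_2. This
  prism has the same dominating sets as K_{p,p}, and K_2 \<box> K_2 is K_{2,2}.
\<close>

lemma edge_not_loop: "simple_graph V E \<Longrightarrow> {u, v} \<in> E \<Longrightarrow> u \<noteq> v"
  unfolding simple_graph_def by fastforce

lemma dominating_subset: "dominating V E S \<Longrightarrow> S \<subseteq> V"
  unfolding dominating_def by blast

lemma dominating_mono: "dominating V E S \<Longrightarrow> S \<subseteq> T \<Longrightarrow> T \<subseteq> V \<Longrightarrow> dominating V E T"
  unfolding dominating_def by blast

lemma dominating_vertices: "dominating V E V"
  unfolding dominating_def by blast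

lemma dominating_Diff_singleton:
  assumes "simple_graph V E" "no_isolated V E" "v \<in> V"
  shows "dominating V E (V - {v})"
proof -
  obtain u where u: "{u, v} \<in> E" using assms(2,3) unfolding no_isolated_def by blast
  moreover have "u \<noteq> v" using assms(1) u by (rule edge_not_loop)
  moreover have "u \<in> V" using assms(1) u unfolding simple_graph_def by blast
  ultimately show ?thesis using u unfolding dominating_def by blast
qed

lemma tar_edges_iff:
  assumes "dominating V E S" "dominating V E T"
  shows "{S, T} \<in> tar_edges V E \<longleftrightarrow> card (sym_diff S T) = 1"
proof
  assume "{S, T} \<in> tar_edges V E"
  then obtain S1 S2 where S12: "{S, T} = {S1, S2}" "card (sym_diff S1 S2) = 1"
    by (auto simp: tar_edges_def)
  then have "sym_diff S T = sym_diff S1 S2 \<or> sym_diff S T = sym_diff S2 S1"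
    by (auto simp: doubleton_eq_iff)
  then show "card (sym_diff S T) = 1" using S12(2) by (metis Un_commute)
next
  assume "card (sym_diff S T) = 1"
  then show "{S, T} \<in> tar_edges V E" using assms unfolding tar_edges_def by blast
qed

lemma graph_iso_refl: "graph_iso V E V E"
  unfolding graph_iso_def by (metis bij_betw_id id_apply)

lemma graph_iso_trans:
  assumes "graph_iso V1 E1 V2 E2" "graph_iso V2 E2 V3 E3"
  shows "graph_iso V1 E1 V3 E3"
proof -
  obtain f where f: "bij_betw f V1 V2" "\<forall>u\<in>V1. \<forall>v\<in>V1. {u, v} \<in> E1 \<longleftrightarrow> {f u, f v} \<in> E2"
    using assms(1) unfolding graph_iso_def by blast
  obtain g where g: "bij_betw g V2 V3" "\<forall>u\<in>V2. \<forall>v\<in>V2. {u, v} \<in> E2 \<longleftrightarrow> {g u, g v} \<in> E3"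
    using assms(2) unfolding graph_iso_def by blast
  have "\<forall>u\<in>V1. \<forall>v\<in>V1. {u, v} \<in> E1 \<longleftrightarrow> {(g \<circ> f) u, (g \<circ> f) v} \<in> E3"
    using f g bij_betw_apply[OF f(1)] by simp
  then show ?thesis using bij_betw_trans[OF f(1) g(1)] unfolding graph_iso_def by blast
qed

lemma bij_betw_preimage:
  assumes "bij_betw f A B" "C \<subseteq> B"
  shows "bij_betw f {x \<in> A. f x \<in> C} C"
proof (rule bij_betw_subset[OF assms(1)])
  show "f ` {x \<in> A. f x \<in> C} = C" using assms unfolding bij_betw_def by blast
qed blast

lemma finite_superset_induct [consumes 2, case_names step]:
  assumes "finite V" "S \<subseteq> V"
    and step: "\<And>S. S \<subseteq> V \<Longrightarrow> (\<And>w. w \<in> V - S \<Longrightarrow> P (insert w S)) \<Longrightarrow> P S"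
  shows "P S"
  using assms(2)
proof (induction "card (V - S)" arbitrary: S rule: less_induct)
  case less
  show ?case
  proof (rule step[OF less.prems])
    fix w assume w: "w \<in> V - S"
    then have "card (V - insert w S) < card (V - S)"
      using \<open>finite V\<close> by (intro psubset_card_mono) auto
    then show "P (insert w S)" using less.hyps less.prems w by blast
  qed
qed

lemma sym_diff_eq_singleton_iff: "sym_diff X Y = {a} \<longleftrightarrow> (\<forall>x. x \<in> Y \<longleftrightarrow> (x \<in> X \<longleftrightarrow> x \<noteq> a))"
  by blast

lemma sym_diff_commute: "sym_diff X Y = sym_diff Y X"
  by blast

lemma sym_diff_right_cancel: "sym_diff Y X = sym_diff Z X \<Longrightarrow> Y = Z"
  by blast

lemma sym_diff_eq_singletonE:
  assumes "sym_diff X Y = {a}"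
  obtains "a \<notin> X" "Y = insert a X" | "a \<notin> Y" "X = insert a Y"
proof -
  have mem: "x \<in> Y \<longleftrightarrow> (x \<in> X \<longleftrightarrow> x \<noteq> a)" for x
    using assms unfolding sym_diff_eq_singleton_iff by blast
  show ?thesis
  proof (cases "a \<in> X")
    case True
    then have "a \<notin> Y" "X = insert a Y" using mem by auto
    then show ?thesis by (rule that(2))
  next
    case False
    then have "Y = insert a X" using mem by auto
    with False show ?thesis by (rule that(1))
  qed
qed

lemma sym_diff_square:
  assumes "sym_diff X Y = {a}" "sym_diff X Z = {b}" "sym_diff Y W = {c}" "sym_diff Z W = {d}"
    and "Y \<noteq> Z" "X \<noteq> W"
  shows "a = d"
proof -
  have Y: "x \<in> Y \<longleftrightarrow> (x \<in> X \<longleftrightarrow> x \<noteq> a)" for x using assms(1) by blast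
  have Z: "x \<in> Z \<longleftrightarrow> (x \<in> X \<longleftrightarrow> x \<noteq> b)" for x using assms(2) by blast
  have WY: "x \<in> W \<longleftrightarrow> (x \<in> Y \<longleftrightarrow> x \<noteq> c)" for x using assms(3) by blast
  have WZ: "x \<in> W \<longleftrightarrow> (x \<in> Z \<longleftrightarrow> x \<noteq> d)" for x using assms(4) by blast
  have "a \<noteq> b" using Y Z assms(5) by auto
  moreover have "a \<noteq> c" using Y WY assms(6) by auto
  ultimately show ?thesis using Y Z WY[of a] WZ[of a] by auto
qed

section \<open>Isomorphisms of domination TAR graphs\<close>

locale tar_isomorphism =
  fixes V :: "'a set" and E :: "'a set set" and V' :: "'b set" and E' :: "'b set set"
    and \<phi> :: "'a set \<Rightarrow> 'b set"
  assumes simple: "simple_graph V E" and no_isolated: "no_isolated V E"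
    and simple': "simple_graph V' E'" and no_isolated': "no_isolated V' E'"
    and bij: "bij_betw \<phi> (tar_vertices V E) (tar_vertices V' E')"
    and edges: "\<forall>S\<in>tar_vertices V E. \<forall>T\<in>tar_vertices V E.
                  {S, T} \<in> tar_edges V E \<longleftrightarrow> {\<phi> S, \<phi> T} \<in> tar_edges V' E'"
begin

lemma finite_vertices: "finite V"
  using simple unfolding simple_graph_def by blast

lemma dominating_image: "dominating V E S \<Longrightarrow> dominating V' E' (\<phi> S)"
  using bij_betw_apply[OF bij] unfolding tar_vertices_def by blast

lemma image_subset: "dominating V E S \<Longrightarrow> \<phi> S \<subseteq> V'"
  by (rule dominating_subset[OF dominating_image])

lemma image_eq_iff: "dominating V E S \<Longrightarrow> dominating V E T \<Longrightarrow> \<phi> S = \<phi> T \<longleftrightarrow> S = T"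
  using bij unfolding bij_betw_def inj_on_def tar_vertices_def by blast

lemma dominating_preimage:
  assumes "dominating V' E' T"
  obtains S where "dominating V E S" "\<phi> S = T"
  using assms bij unfolding bij_betw_def tar_vertices_def by (metis imageE mem_Collect_eq)

lemma card_sym_diff_image_eq_1_iff:
  assumes "dominating V E S" "dominating V E T"
  shows "card (sym_diff (\<phi> S) (\<phi> T)) = 1 \<longleftrightarrow> card (sym_diff S T) = 1"
  using edges assms dominating_image[OF assms(1)] dominating_image[OF assms(2)]
  by (simp add: tar_vertices_def tar_edges_iff)

lemma sym_diff_image_singleton:
  assumes "dominating V E S" "dominating V E T" "sym_diff S T = {a}"
  obtains b where "sym_diff (\<phi> S) (\<phi> T) = {b}"
proof -
  have "card (sym_diff (\<phi> S) (\<phi> T)) = 1"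
    using card_sym_diff_image_eq_1_iff[OF assms(1,2)] assms(3) by simp
  then show ?thesis using that by (rule card_1_singletonE)
qed

lemma sym_diff_preimage_singleton:
  assumes "dominating V E S" "dominating V E T" "sym_diff (\<phi> S) (\<phi> T) = {b}"
  obtains a where "sym_diff S T = {a}"
proof -
  have "card (sym_diff S T) = 1"
    using card_sym_diff_image_eq_1_iff[OF assms(1,2)] assms(3) by simp
  then show ?thesis using that by (rule card_1_singletonE)
qed

definition label :: "'a \<Rightarrow> 'b" where
  "label v = the_elem (sym_diff (\<phi> (V - {v})) (\<phi> V))"

lemma sym_diff_image_Diff_singleton:
  assumes "v \<in> V"
  shows "sym_diff (\<phi> (V - {v})) (\<phi> V) = {label v}"
proof -
  have "sym_diff (V - {v}) V = {v}" using assms by blast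
  then obtain b where "sym_diff (\<phi> (V - {v})) (\<phi> V) = {b}"
    by (rule sym_diff_image_singleton[OF dominating_Diff_singleton[OF simple no_isolated assms]
          dominating_vertices])
  then show ?thesis unfolding label_def by simp
qed

text \<open>Downward induction from V - {v}: two TAR edges adding v that lie on a common square of the
  TAR graph are mapped to edges toggling the same element.\<close>

lemma sym_diff_image_insert:
  assumes "v \<in> V" "dominating V E S" "v \<notin> S"
  shows "sym_diff (\<phi> S) (\<phi> (insert v S)) = {label v}"
  using finite_vertices dominating_subset[OF assms(2)] assms(2,3)
proof (induction S rule: finite_superset_induct)
  case (step S)
  show ?case
  proof (cases "S = V - {v}")
    case True
    then have "insert v S = V" using assms(1) by blast
    then show ?thesis using True sym_diff_image_Diff_singleton[OF assms(1)] by simp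
  next
    case False
    then obtain w where w: "w \<in> V - S" "w \<noteq> v" using step.hyps step.prems(2) by blast
    let ?Sv = "insert v S" and ?Sw = "insert w S" and ?Svw = "insert v (insert w S)"
    have dom_Sv: "dominating V E ?Sv"
      by (rule dominating_mono[OF step.prems(1)]) (use step.hyps assms(1) in auto)
    have dom_Sw: "dominating V E ?Sw"
      by (rule dominating_mono[OF step.prems(1)]) (use step.hyps w in auto)
    have dom_Svw: "dominating V E ?Svw"
      by (rule dominating_mono[OF step.prems(1)]) (use step.hyps w assms(1) in auto)
    have d: "sym_diff (\<phi> ?Sw) (\<phi> ?Svw) = {label v}"
      using step.IH[OF w(1) dom_Sw] w step.prems(2) by blast
    obtain a where a: "sym_diff (\<phi> S) (\<phi> ?Sv) = {a}"
      using sym_diff_image_singleton[OF step.prems(1) dom_Sv] step.prems(2) by auto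
    obtain b where b: "sym_diff (\<phi> S) (\<phi> ?Sw) = {b}"
      using sym_diff_image_singleton[OF step.prems(1) dom_Sw] w by auto
    obtain c where c: "sym_diff (\<phi> ?Sv) (\<phi> ?Svw) = {c}"
      using sym_diff_image_singleton[OF dom_Sv dom_Svw, of w] w step.prems(2) by auto
    have "\<phi> ?Sv \<noteq> \<phi> ?Sw" using image_eq_iff[OF dom_Sv dom_Sw] w step.prems(2) by auto
    moreover have "\<phi> S \<noteq> \<phi> ?Svw" using image_eq_iff[OF step.prems(1) dom_Svw] step.prems(2) by auto
    ultimately have "a = label v" using sym_diff_square[OF a b c d] by blast
    then show ?thesis using a by simp
  qed
qed

lemma label_in_vertices:
  assumes "v \<in> V"
  shows "label v \<in> V'"
proof -
  have "label v \<in> sym_diff (\<phi> (V - {v})) (\<phi> V)"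
    using sym_diff_image_Diff_singleton[OF assms] by simp
  moreover have "\<phi> (V - {v}) \<subseteq> V'"
    using image_subset dominating_Diff_singleton[OF simple no_isolated assms] .
  ultimately show ?thesis using image_subset[OF dominating_vertices] by blast
qed

lemma inj_on_label: "inj_on label V"
proof (rule inj_onI)
  fix v w assume vw: "v \<in> V" "w \<in> V" "label v = label w"
  then have "sym_diff (\<phi> (V - {v})) (\<phi> V) = sym_diff (\<phi> (V - {w})) (\<phi> V)"
    using sym_diff_image_Diff_singleton by simp
  then have "\<phi> (V - {v}) = \<phi> (V - {w})" by (rule sym_diff_right_cancel)
  then have "V - {v} = V - {w}"
    using image_eq_iff dominating_Diff_singleton[OF simple no_isolated] vw(1,2) by blast
  then show "v = w" using vw(1,2) by blast
qed

lemma label_image: "label ` V = V'"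
proof
  show "label ` V \<subseteq> V'" using label_in_vertices by blast
next
  show "V' \<subseteq> label ` V"
  proof
    fix w assume w: "w \<in> V'"
    obtain R where R: "dominating V E R" "\<phi> R = V'"
      using dominating_preimage[OF dominating_vertices] .
    obtain R' where R': "dominating V E R'" "\<phi> R' = V' - {w}"
      using dominating_preimage[OF dominating_Diff_singleton[OF simple' no_isolated' w]] .
    have w_toggled: "sym_diff (\<phi> R') (\<phi> R) = {w}" using R(2) R'(2) w by auto
    then obtain x where x: "sym_diff R' R = {x}" by (rule sym_diff_preimage_singleton[OF R'(1) R(1)])
    then have "x \<in> V" using dominating_subset[OF R(1)] dominating_subset[OF R'(1)] by auto
    from x have "sym_diff (\<phi> R') (\<phi> R) = {label x}"
    proof (cases rule: sym_diff_eq_singletonE)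
      case 1
      then show ?thesis using sym_diff_image_insert[OF \<open>x \<in> V\<close> R'(1)] by simp
    next
      case 2
      then show ?thesis
        using sym_diff_image_insert[OF \<open>x \<in> V\<close> R(1)] sym_diff_commute[of "\<phi> R'"] by simp
    qed
    then show "w \<in> label ` V" using w_toggled \<open>x \<in> V\<close> by auto
  qed
qed

lemma label_mem_image_iff:
  assumes "dominating V E S" "u \<in> V"
  shows "label u \<in> \<phi> S \<longleftrightarrow> (u \<in> S \<longleftrightarrow> label u \<in> \<phi> V)"
  using finite_vertices dominating_subset[OF assms(1)] assms
proof (induction S arbitrary: u rule: finite_superset_induct)
  case (step S)
  show ?case
  proof (cases "S = V")
    case False
    then obtain w where w: "w \<in> V - S" using step.hyps by blast
    have dom: "dominating V E (insert w S)"
      by (rule dominating_mono[OF step.prems(1)]) (use step.hyps w in auto)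
    have toggle: "y \<in> \<phi> (insert w S) \<longleftrightarrow> (y \<in> \<phi> S \<longleftrightarrow> y \<noteq> label w)" for y
      using sym_diff_image_insert[of w S] step.prems(1) w unfolding sym_diff_eq_singleton_iff by blast
    have "label u \<noteq> label w" if "u \<noteq> w"
      using inj_onD[OF inj_on_label] that step.prems(2) w by blast
    then show ?thesis
      using step.IH[OF w dom step.prems(2)] step.IH[OF w dom, of w] toggle w by (cases "u = w") auto
  qed (simp add: step.prems(2))
qed

text \<open>Let S consist of c and its non-neighbours. Adding label c to \<phi> S yields the image of a TAR
  neighbour of S, which by the previous lemma could only be S - {c}; but that set does not
  dominate c.\<close>

lemma label_mem_image_vertices:
  assumes c: "c \<in> V"
  shows "label c \<in> \<phi> V"
proof (rule ccontr)
  assume nc: "label c \<notin> \<phi> V"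
  define S where "S = V - {u. {u, c} \<in> E}"
  have "c \<in> S" using c edge_not_loop[OF simple] unfolding S_def by blast
  have dom: "dominating V E S"
    unfolding dominating_def
  proof (intro conjI ballI)
    fix v assume "v \<in> V"
    show "v \<in> S \<or> (\<exists>u\<in>S. {u, v} \<in> E)"
    proof (cases "v \<in> S")
      case False
      then have "{c, v} \<in> E" using \<open>v \<in> V\<close> unfolding S_def by (simp add: insert_commute)
      then show ?thesis using \<open>c \<in> S\<close> by blast
    qed simp
  qed (simp add: S_def)
  have not_dom: "\<not> dominating V E (S - {c})"
    using c unfolding dominating_def S_def by blast
  have "label c \<notin> \<phi> S" using label_mem_image_iff[OF dom c] \<open>c \<in> S\<close> nc by blast
  have "dominating V' E' (insert (label c) (\<phi> S))"
    by (rule dominating_mono[OF dominating_image[OF dom]])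
      (use image_subset[OF dom] label_in_vertices[OF c] in auto)
  then obtain R where R: "dominating V E R" "\<phi> R = insert (label c) (\<phi> S)"
    by (rule dominating_preimage)
  have "sym_diff (\<phi> S) (\<phi> R) = {label c}" using R(2) \<open>label c \<notin> \<phi> S\<close> by auto
  then obtain x where x: "sym_diff S R = {x}" by (rule sym_diff_preimage_singleton[OF dom R(1)])
  then have "x \<in> V" using dominating_subset[OF dom] dominating_subset[OF R(1)] by auto
  have "x \<in> R \<longleftrightarrow> x \<notin> S" using x unfolding sym_diff_eq_singleton_iff by blast
  then have "label x \<in> \<phi> R \<longleftrightarrow> label x \<notin> \<phi> S"
    using label_mem_image_iff[OF dom \<open>x \<in> V\<close>] label_mem_image_iff[OF R(1) \<open>x \<in> V\<close>] by blast
  then have "label x = label c" using R(2) by blast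
  then have "x = c" using inj_onD[OF inj_on_label] \<open>x \<in> V\<close> c by blast
  then have "R = S - {c}" using x \<open>c \<in> S\<close> unfolding sym_diff_eq_singleton_iff by auto
  then show False using R(1) not_dom by simp
qed

lemma image_eq_label_image:
  assumes "dominating V E S"
  shows "\<phi> S = label ` S"
proof (intro set_eqI iffI)
  fix y assume y: "y \<in> \<phi> S"
  then obtain u where "u \<in> V" "y = label u" using image_subset[OF assms] label_image by blast
  then show "y \<in> label ` S"
    using label_mem_image_iff[OF assms] label_mem_image_vertices y by blast
next
  fix y assume "y \<in> label ` S"
  then obtain u where "u \<in> S" "y = label u" by blast
  then show "y \<in> \<phi> S"
    using label_mem_image_iff[OF assms] label_mem_image_vertices dominating_subset[OF assms] by blast
qed

theorem dominating_iff_dominating_label_image: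
  assumes "S \<subseteq> V"
  shows "dominating V E S \<longleftrightarrow> dominating V' E' (label ` S)"
proof
  assume "dominating V E S"
  then show "dominating V' E' (label ` S)" using dominating_image image_eq_label_image by metis
next
  assume "dominating V' E' (label ` S)"
  then obtain R where R: "dominating V E R" "\<phi> R = label ` S" by (rule dominating_preimage)
  then have "label ` R = label ` S" using image_eq_label_image by simp
  then have "R = S"
    using inj_on_image_eq_iff[OF inj_on_label] dominating_subset[OF R(1)] assms by blast
  then show "dominating V E S" using R(1) by simp
qed

end

lemma tar_iso_imp_dominating_bij:
  assumes "simple_graph V E" "no_isolated V E" "simple_graph V' E'" "no_isolated V' E'"
    and "graph_iso (tar_vertices V E) (tar_edges V E) (tar_vertices V' E') (tar_edges V' E')"
  obtains \<sigma> where "bij_betw \<sigma> V V'" "\<And>S. S \<subseteq> V \<Longrightarrow> dominating V E S \<longleftrightarrow> dominating V' E' (\<sigma> ` S)"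
proof -
  obtain \<phi> where "tar_isomorphism V E V' E' \<phi>"
    using assms unfolding graph_iso_def tar_isomorphism_def by blast
  then interpret tar_isomorphism V E V' E' \<phi> .
  show ?thesis
    using that[of label] inj_on_label label_image dominating_iff_dominating_label_image
    unfolding bij_betw_def by blast
qed

section \<open>Graphs dominated like a complete bipartite graph\<close>

definition complete_bipartite_on :: "'a set \<Rightarrow> 'a set set \<Rightarrow> 'a set \<Rightarrow> 'a set \<Rightarrow> bool" where
  "complete_bipartite_on V E A B \<longleftrightarrow> (\<forall>u\<in>V. \<forall>v\<in>V. {u, v} \<in> E \<longleftrightarrow> (u \<in> A \<longleftrightarrow> v \<in> B))"

definition prism_on :: "'a set set \<Rightarrow> 'a set \<Rightarrow> 'a set \<Rightarrow> ('a \<Rightarrow> 'a) \<Rightarrow> bool" where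
  "prism_on E A B m \<longleftrightarrow> bij_betw m B A
     \<and> (\<forall>u\<in>A. \<forall>v\<in>A. {u, v} \<in> E \<longleftrightarrow> u \<noteq> v) \<and> (\<forall>u\<in>B. \<forall>v\<in>B. {u, v} \<in> E \<longleftrightarrow> u \<noteq> v)
     \<and> (\<forall>u\<in>A. \<forall>v\<in>B. {u, v} \<in> E \<longleftrightarrow> u = m v)"

locale two_part_domination =
  fixes V :: "'a set" and E :: "'a set set" and A B :: "'a set"
  assumes simple: "simple_graph V E"
    and partition: "A \<union> B = V" "A \<inter> B = {}" "A \<noteq> {}" "B \<noteq> {}"
    and dominating_iff:
      "\<And>S. S \<subseteq> V \<Longrightarrow> dominating V E S \<longleftrightarrow> (S \<inter> A \<noteq> {} \<and> S \<inter> B \<noteq> {}) \<or> S = A \<or> S = B"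
begin

lemma swap: "two_part_domination V E B A"
proof
  fix S assume "S \<subseteq> V"
  then show "dominating V E S \<longleftrightarrow> (S \<inter> B \<noteq> {} \<and> S \<inter> A \<noteq> {}) \<or> S = B \<or> S = A"
    using dominating_iff by blast
qed (use simple partition in auto)

lemma finite_part: "finite A"
  using simple partition(1) unfolding simple_graph_def by auto

lemma pair_dominating:
  assumes "a \<in> A" "b \<in> B" "w \<in> V"
  shows "w = a \<or> w = b \<or> {a, w} \<in> E \<or> {b, w} \<in> E"
proof -
  have "{a, b} \<subseteq> V" "{a, b} \<inter> A \<noteq> {}" "{a, b} \<inter> B \<noteq> {}" using assms partition(1) by auto
  then have "dominating V E {a, b}" using dominating_iff by blast
  then show ?thesis using assms(3) unfolding dominating_def by auto
qed

lemma part_dominates_other: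
  assumes "w \<in> B"
  obtains u where "u \<in> A" "{u, w} \<in> E"
proof -
  have "A \<subseteq> V" using partition(1) by blast
  then have "dominating V E A" using dominating_iff by simp
  then show ?thesis using assms partition(1,2) that unfolding dominating_def by blast
qed

lemma exists_undominated_by_part_minus:
  assumes "x \<in> A"
  obtains w where "w \<in> V" "w \<notin> A - {x}" "\<And>u. u \<in> A - {x} \<Longrightarrow> {u, w} \<notin> E"
proof -
  have sub: "A - {x} \<subseteq> V" using partition(1) by blast
  have "(A - {x}) \<inter> B = {}" "A - {x} \<noteq> A" "A - {x} \<noteq> B"
    using assms partition(2,4) by blast+
  then have "\<not> dominating V E (A - {x})" using dominating_iff[OF sub] by simp
  then show ?thesis using that sub unfolding dominating_def by blast
qed

lemma adjacent_if_cross_nonadjacent: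
  assumes "u \<in> A" "b \<in> B" "{u, b} \<notin> E" "a \<in> A" "a \<noteq> u"
  shows "{a, u} \<in> E"
  using pair_dominating[OF assms(4,2), of u] assms partition by (auto simp: insert_commute)

lemma independent_if_complete_cross:
  assumes complete: "\<forall>a\<in>A. \<forall>b\<in>B. {a, b} \<in> E" and "u \<in> A" "v \<in> A"
  shows "{u, v} \<notin> E"
proof
  assume uv: "{u, v} \<in> E"
  obtain w where w: "w \<in> V" "w \<notin> A - {u}" "\<And>y. y \<in> A - {u} \<Longrightarrow> {y, w} \<notin> E"
    using exists_undominated_by_part_minus[OF \<open>u \<in> A\<close>] by blast
  have "v \<in> A - {u}" using edge_not_loop[OF simple uv] \<open>v \<in> A\<close> by blast
  then have "{v, w} \<notin> E" using w(3) by blast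
  moreover have "w = u \<or> w \<in> B" using w(1,2) partition(1) by blast
  ultimately show False using uv complete \<open>v \<in> A\<close> by (auto simp: insert_commute)
qed

context
  fixes a0 b0 assumes cross_nonadjacent: "a0 \<in> A" "b0 \<in> B" "{a0, b0} \<notin> E"
begin

lemma clique_if_cross_nonadjacent:
  assumes "u \<in> A" "v \<in> A"
  shows "{u, v} \<in> E \<longleftrightarrow> u \<noteq> v"
proof
  assume "u \<noteq> v"
  have a0_adjacent: "{x, a0} \<in> E" if "x \<in> A" "x \<noteq> a0" for x
    using adjacent_if_cross_nonadjacent[OF cross_nonadjacent that] .
  consider "u = a0" | "v = a0" | "u \<noteq> a0" "v \<noteq> a0" by blast
  then show "{u, v} \<in> E"
  proof cases
    case 1
    then show ?thesis using a0_adjacent[OF assms(2)] \<open>u \<noteq> v\<close> by (simp add: insert_commute)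
  next
    case 2
    then show ?thesis using a0_adjacent[OF assms(1)] \<open>u \<noteq> v\<close> by simp
  next
    case 3
    obtain w where w: "w \<in> V" "w \<notin> A - {v}" "\<And>y. y \<in> A - {v} \<Longrightarrow> {y, w} \<notin> E"
      using exists_undominated_by_part_minus[OF assms(2)] by blast
    have "w \<noteq> v"
      using w(3)[of a0] a0_adjacent[OF assms(2)] 3 cross_nonadjacent(1) by (auto simp: insert_commute)
    then have "w \<in> B" using w(1,2) partition(1) by blast
    moreover have "{u, w} \<notin> E" using w(3) assms(1) \<open>u \<noteq> v\<close> by blast
    ultimately show ?thesis
      using adjacent_if_cross_nonadjacent[OF assms(1) _ _ assms(2)] \<open>u \<noteq> v\<close>
      by (simp add: insert_commute)
  qed
qed (use edge_not_loop[OF simple] in blast)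

lemma two_le_card_if_cross_nonadjacent: "2 \<le> card A"
proof -
  obtain u where u: "u \<in> A" "{u, b0} \<in> E" using part_dominates_other[OF cross_nonadjacent(2)] .
  then have "u \<noteq> a0" using cross_nonadjacent(3) by blast
  then have "card {u, a0} = 2" by simp
  moreover have "{u, a0} \<subseteq> A" using u cross_nonadjacent(1) by blast
  ultimately show ?thesis using card_mono[OF finite_part] by metis
qed

lemma private_neighbour_if_cross_nonadjacent:
  assumes "x \<in> A"
  obtains b where "b \<in> B" "\<And>a. a \<in> A \<Longrightarrow> {a, b} \<in> E \<longleftrightarrow> a = x"
proof -
  obtain w where w: "w \<in> V" "w \<notin> A - {x}" "\<And>y. y \<in> A - {x} \<Longrightarrow> {y, w} \<notin> E"
    using exists_undominated_by_part_minus[OF assms] by blast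
  have "A - {x} \<noteq> {}"
  proof
    assume "A - {x} = {}"
    then have "card A \<le> card {x}"
      using card_mono by (metis Diff_eq_empty_iff finite.emptyI finite.insertI)
    then show False using two_le_card_if_cross_nonadjacent by simp
  qed
  then obtain y where y: "y \<in> A - {x}" by blast
  have "w \<noteq> x" using w(3)[OF y] clique_if_cross_nonadjacent y assms by blast
  then have "w \<in> B" using w(1,2) partition(1) by blast
  moreover obtain u where "u \<in> A" "{u, w} \<in> E" using part_dominates_other[OF \<open>w \<in> B\<close>] .
  then have "u = x" using w(3) by blast
  ultimately show ?thesis using that[of w] w(3) \<open>{u, w} \<in> E\<close> by blast
qed

end

lemma complete_bipartite_if_complete_cross:
  assumes complete: "\<forall>a\<in>A. \<forall>b\<in>B. {a, b} \<in> E" and "u \<in> V" "v \<in> V"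
  shows "{u, v} \<in> E \<longleftrightarrow> (u \<in> A \<longleftrightarrow> v \<in> B)"
proof -
  have complete': "\<forall>b\<in>B. \<forall>a\<in>A. {b, a} \<in> E" using complete by (metis insert_commute)
  have "u \<in> B \<longleftrightarrow> u \<notin> A" "v \<in> B \<longleftrightarrow> v \<notin> A" using assms(2,3) partition(1,2) by blast+
  then show ?thesis
    using independent_if_complete_cross[OF complete, of u v] complete complete'
      two_part_domination.independent_if_complete_cross[OF swap complete', of u v]
    by (cases "u \<in> A"; cases "v \<in> A") auto
qed

text \<open>Every vertex of A is the only A-neighbour of some vertex of B, and vice versa. The two resulting
  injections force card A = card B, so the edges between A and B form a perfect matching.\<close>

lemma perfect_matching_if_cross_nonadjacent:
  assumes "a0 \<in> A" "b0 \<in> B" "{a0, b0} \<notin> E"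
  obtains m where "bij_betw m B A" "\<And>u v. u \<in> A \<Longrightarrow> v \<in> B \<Longrightarrow> {u, v} \<in> E \<longleftrightarrow> u = m v"
proof -
  interpret BA: two_part_domination V E B A by (rule swap)
  have "{b0, a0} \<notin> E" using assms(3) by (simp add: insert_commute)
  have "\<forall>x\<in>B. \<exists>a\<in>A. \<forall>b\<in>B. {b, a} \<in> E \<longleftrightarrow> b = x"
    using BA.private_neighbour_if_cross_nonadjacent[OF assms(2,1) \<open>{b0, a0} \<notin> E\<close>] by metis
  then obtain m where m: "\<And>x. x \<in> B \<Longrightarrow> m x \<in> A"
    "\<And>x b. x \<in> B \<Longrightarrow> b \<in> B \<Longrightarrow> {b, m x} \<in> E \<longleftrightarrow> b = x"
    by metis
  have "\<forall>x\<in>A. \<exists>b\<in>B. \<forall>a\<in>A. {a, b} \<in> E \<longleftrightarrow> a = x"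
    using private_neighbour_if_cross_nonadjacent[OF assms] by metis
  then obtain h where h: "\<And>x. x \<in> A \<Longrightarrow> h x \<in> B"
    "\<And>x a. x \<in> A \<Longrightarrow> a \<in> A \<Longrightarrow> {a, h x} \<in> E \<longleftrightarrow> a = x"
    by metis
  have inj_m: "inj_on m B" by (rule inj_onI) (metis m(2))
  have inj_h: "inj_on h A" by (rule inj_onI) (metis h(2))
  have "card A \<le> card B" using card_inj_on_le[OF inj_h] h(1) BA.finite_part by blast
  then have "m ` B = A"
    using card_seteq[OF finite_part] m(1) card_image[OF inj_m] by (metis image_subsetI)
  then have bij: "bij_betw m B A" using inj_m by (simp add: bij_betw_def)
  have "{u, v} \<in> E \<longleftrightarrow> u = m v" if "u \<in> A" "v \<in> B" for u v
  proof -
    obtain y where y: "y \<in> B" "u = m y" using \<open>m ` B = A\<close> \<open>u \<in> A\<close> by blast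
    then have "{u, v} \<in> E \<longleftrightarrow> v = y"
      using m(2)[OF y(1) \<open>v \<in> B\<close>] by (simp add: insert_commute)
    also have "\<dots> \<longleftrightarrow> u = m v" using inj_onD[OF inj_m] y \<open>v \<in> B\<close> by metis
    finally show ?thesis .
  qed
  then show ?thesis using that bij by blast
qed

theorem complete_bipartite_or_prism:
  "complete_bipartite_on V E A B \<or> (2 \<le> card A \<and> (\<exists>m. prism_on E A B m))"
proof (cases "\<forall>a\<in>A. \<forall>b\<in>B. {a, b} \<in> E")
  case True
  have "complete_bipartite_on V E A B"
    unfolding complete_bipartite_on_def
    by (intro ballI) (rule complete_bipartite_if_complete_cross[OF True])
  then show ?thesis ..
next
  case False
  then obtain a0 b0 where cross: "a0 \<in> A" "b0 \<in> B" "{a0, b0} \<notin> E" by blast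
  then have "{b0, a0} \<notin> E" by (simp add: insert_commute)
  have "\<forall>u\<in>A. \<forall>v\<in>A. {u, v} \<in> E \<longleftrightarrow> u \<noteq> v"
    by (intro ballI) (rule clique_if_cross_nonadjacent[OF cross])
  moreover have "\<forall>u\<in>B. \<forall>v\<in>B. {u, v} \<in> E \<longleftrightarrow> u \<noteq> v"
    by (intro ballI)
      (rule two_part_domination.clique_if_cross_nonadjacent[OF swap cross(2,1) \<open>{b0, a0} \<notin> E\<close>])
  moreover obtain m where "bij_betw m B A" "\<And>u v. u \<in> A \<Longrightarrow> v \<in> B \<Longrightarrow> {u, v} \<in> E \<longleftrightarrow> u = m v"
    using perfect_matching_if_cross_nonadjacent[OF cross] by blast
  ultimately have "prism_on E A B m" unfolding prism_on_def by blast
  then show ?thesis using two_le_card_if_cross_nonadjacent[OF cross] by blast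
qed

end

lemma two_part_domination_pullback:
  assumes "simple_graph V E" and \<sigma>: "bij_betw \<sigma> V V'"
    and dominating: "\<And>S. S \<subseteq> V \<Longrightarrow> dominating V E S \<longleftrightarrow> dominating V' E' (\<sigma> ` S)"
    and "two_part_domination V' E' A' B'"
  shows "two_part_domination V E {v \<in> V. \<sigma> v \<in> A'} {v \<in> V. \<sigma> v \<in> B'}"
    (is "two_part_domination V E ?A ?B")
proof -
  interpret two_part_domination V' E' A' B' by fact
  have image: "\<sigma> ` {v \<in> V. \<sigma> v \<in> X} = X" if "X \<subseteq> V'" for X
    using bij_betw_imp_surj_on[OF bij_betw_preimage[OF \<sigma> that]] .
  have image_eq_iff: "\<sigma> ` S = X \<longleftrightarrow> S = {v \<in> V. \<sigma> v \<in> X}" if "S \<subseteq> V" "X \<subseteq> V'" for S X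
    using inj_on_image_eq_iff[OF bij_betw_imp_inj_on[OF \<sigma>] that(1), of "{v \<in> V. \<sigma> v \<in> X}"]
      image[OF that(2)] by auto
  have "A' \<subseteq> V'" "B' \<subseteq> V'" using partition(1) by auto
  show ?thesis
  proof
    fix S assume S: "S \<subseteq> V"
    have "\<sigma> ` S \<subseteq> V'" using S bij_betw_imp_surj_on[OF \<sigma>] by blast
    have "dominating V E S \<longleftrightarrow> dominating V' E' (\<sigma> ` S)" by (rule dominating[OF S])
    also have "\<dots> \<longleftrightarrow> (\<sigma> ` S \<inter> A' \<noteq> {} \<and> \<sigma> ` S \<inter> B' \<noteq> {}) \<or> \<sigma> ` S = A' \<or> \<sigma> ` S = B'"
      by (rule dominating_iff[OF \<open>\<sigma> ` S \<subseteq> V'\<close>])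
    also have "\<sigma> ` S \<inter> A' \<noteq> {} \<longleftrightarrow> S \<inter> ?A \<noteq> {}" using S by blast
    also have "\<sigma> ` S \<inter> B' \<noteq> {} \<longleftrightarrow> S \<inter> ?B \<noteq> {}" using S by blast
    also have "\<sigma> ` S = A' \<longleftrightarrow> S = ?A" by (rule image_eq_iff[OF S \<open>A' \<subseteq> V'\<close>])
    also have "\<sigma> ` S = B' \<longleftrightarrow> S = ?B" by (rule image_eq_iff[OF S \<open>B' \<subseteq> V'\<close>])
    finally show "dominating V E S \<longleftrightarrow> (S \<inter> ?A \<noteq> {} \<and> S \<inter> ?B \<noteq> {}) \<or> S = ?A \<or> S = ?B" .
  next
    show "?A \<union> ?B = V" using bij_betw_apply[OF \<sigma>] partition(1) by blast
    show "?A \<inter> ?B = {}" using partition(2) by blast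
    show "?A \<noteq> {}" using image[OF \<open>A' \<subseteq> V'\<close>] partition(3) by auto
    show "?B \<noteq> {}" using image[OF \<open>B' \<subseteq> V'\<close>] partition(4) by auto
  qed (rule assms(1))
qed

lemma two_part_domination_same_dominating:
  assumes "two_part_domination V E A B" "two_part_domination V E' A B"
  shows "dominating V E = dominating V E'"
proof
  fix S show "dominating V E S = dominating V E' S"
  proof (cases "S \<subseteq> V")
    case True
    then show ?thesis
      using two_part_domination.dominating_iff[OF assms(1) True]
        two_part_domination.dominating_iff[OF assms(2) True] by simp
  qed (metis dominating_subset)
qed

lemma two_part_domination_complete_bipartite:
  assumes "simple_graph V E" "A \<union> B = V" "A \<inter> B = {}" "A \<noteq> {}" "B \<noteq> {}"
    and complete: "complete_bipartite_on V E A B"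
  shows "two_part_domination V E A B"
proof
  fix S assume S: "S \<subseteq> V"
  have adj: "{u, v} \<in> E \<longleftrightarrow> (u \<in> A \<longleftrightarrow> v \<in> B)" if "u \<in> V" "v \<in> V" for u v
    using complete that unfolding complete_bipartite_on_def by blast
  have dominated_iff: "(\<exists>u\<in>S. {u, v} \<in> E) \<longleftrightarrow> (if v \<in> A then S \<inter> B \<noteq> {} else S \<inter> A \<noteq> {})"
    if "v \<in> V" for v
    using adj[OF _ that] S that assms(2,3) by auto
  show "dominating V E S \<longleftrightarrow> (S \<inter> A \<noteq> {} \<and> S \<inter> B \<noteq> {}) \<or> S = A \<or> S = B"
    unfolding dominating_def using S dominated_iff assms(2-5) by auto
qed (use assms in auto)

context
  fixes V :: "'a set" and E :: "'a set set" and A B :: "'a set" and m :: "'a \<Rightarrow> 'a"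
  assumes partition: "A \<union> B = V" "A \<inter> B = {}" and prism: "prism_on E A B m"
begin

lemma prism_on_dominated_in_A:
  assumes S: "S \<subseteq> V" and "a \<in> A" "a \<notin> S"
  shows "(\<exists>u\<in>S. {u, a} \<in> E) \<longleftrightarrow> S \<inter> A \<noteq> {} \<or> a \<in> m ` (S \<inter> B)"
proof -
  have "{u, a} \<in> E \<longleftrightarrow> (u \<in> A \<or> a = m u)" if "u \<in> S" for u
  proof (cases "u \<in> A")
    case True
    then show ?thesis using prism \<open>a \<in> A\<close> \<open>a \<notin> S\<close> that unfolding prism_on_def by auto
  next
    case False
    then have "u \<in> B" using that S partition(1) by blast
    then have "{a, u} \<in> E \<longleftrightarrow> a = m u" using prism \<open>a \<in> A\<close> unfolding prism_on_def by simp
    then show ?thesis using False by (simp add: insert_commute)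
  qed
  then show ?thesis using S partition by blast
qed

lemma prism_on_dominated_in_B:
  assumes S: "S \<subseteq> V" and "b \<in> B" "b \<notin> S"
  shows "(\<exists>u\<in>S. {u, b} \<in> E) \<longleftrightarrow> S \<inter> B \<noteq> {} \<or> m b \<in> S"
proof -
  have "{u, b} \<in> E \<longleftrightarrow> (u \<in> B \<or> u = m b)" if "u \<in> S" for u
  proof (cases "u \<in> B")
    case True
    then show ?thesis using prism \<open>b \<in> B\<close> \<open>b \<notin> S\<close> that unfolding prism_on_def by auto
  next
    case False
    then have "u \<in> A" using that S partition(1) by blast
    then show ?thesis using prism \<open>b \<in> B\<close> False unfolding prism_on_def by simp
  qed
  then show ?thesis using S partition by blast
qed

lemma prism_on_dominating_imp:
  assumes S: "S \<subseteq> V" and "dominating V E S"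
  shows "(S \<inter> A \<noteq> {} \<and> S \<inter> B \<noteq> {}) \<or> S = A \<or> S = B"
proof -
  have m: "m ` B = A" "inj_on m B" using prism unfolding prism_on_def bij_betw_def by blast+
  have dominated: "\<exists>u\<in>S. {u, v} \<in> E" if "v \<in> V" "v \<notin> S" for v
    using assms(2) that unfolding dominating_def by blast
  have "A \<subseteq> S" if "S \<inter> B = {}"
  proof
    fix a assume "a \<in> A"
    then obtain b where b: "b \<in> B" "a = m b" using m(1) by blast
    then have "b \<in> V" "b \<notin> S" using \<open>S \<inter> B = {}\<close> partition(1) by blast+
    then have "m b \<in> S" using prism_on_dominated_in_B[OF S b(1)] dominated \<open>S \<inter> B = {}\<close> by blast
    then show "a \<in> S" using b(2) by simp
  qed
  moreover have "B \<subseteq> S" if "S \<inter> A = {}"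
  proof
    fix b assume "b \<in> B"
    then have "m b \<in> A" using m(1) by blast
    then have "m b \<in> V" "m b \<notin> S" using \<open>S \<inter> A = {}\<close> partition(1) by blast+
    then have "m b \<in> m ` (S \<inter> B)"
      using prism_on_dominated_in_A[OF S \<open>m b \<in> A\<close>] dominated \<open>S \<inter> A = {}\<close> by blast
    then obtain u where "u \<in> S" "u \<in> B" "m b = m u" by blast
    then show "b \<in> S" using inj_onD[OF m(2)] \<open>b \<in> B\<close> by metis
  qed
  ultimately show ?thesis using S partition by blast
qed

lemma prism_on_dominating_if:
  assumes S: "S \<subseteq> V" and parts: "(S \<inter> A \<noteq> {} \<and> S \<inter> B \<noteq> {}) \<or> S = A \<or> S = B"
  shows "dominating V E S"
proof -
  have m: "m ` B = A" using prism unfolding prism_on_def bij_betw_def by blast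
  have "\<exists>u\<in>S. {u, v} \<in> E" if "v \<in> V" "v \<notin> S" for v
  proof (cases "v \<in> A")
    case True
    have "S \<inter> A \<noteq> {} \<or> S = B" using parts True \<open>v \<notin> S\<close> by blast
    then have "S \<inter> A \<noteq> {} \<or> v \<in> m ` (S \<inter> B)" using m True by auto
    then show ?thesis using prism_on_dominated_in_A[OF S True \<open>v \<notin> S\<close>] by blast
  next
    case False
    then have "v \<in> B" using \<open>v \<in> V\<close> partition(1) by blast
    then have "m v \<in> A" using m by blast
    have "S \<inter> B \<noteq> {} \<or> S = A" using parts \<open>v \<in> B\<close> \<open>v \<notin> S\<close> by blast
    then have "S \<inter> B \<noteq> {} \<or> m v \<in> S" using \<open>m v \<in> A\<close> by blast
    then show ?thesis using prism_on_dominated_in_B[OF S \<open>v \<in> B\<close> \<open>v \<notin> S\<close>] by blast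
  qed
  then show ?thesis using S unfolding dominating_def by blast
qed

end

lemma two_part_domination_prism:
  assumes "simple_graph V E" "A \<union> B = V" "A \<inter> B = {}" "A \<noteq> {}" "B \<noteq> {}"
    and "prism_on E A B m"
  shows "two_part_domination V E A B"
  by unfold_locales
    (use assms prism_on_dominating_imp[OF assms(2,3,6)] prism_on_dominating_if[OF assms(2,3,6)]
      in blast)+

section \<open>Complete bipartite graphs and prisms\<close>

definition Kpart :: "bool \<Rightarrow> nat \<Rightarrow> (bool \<times> nat) set" where
  "Kpart b n = {x. fst x = b \<and> snd x < n}"

lemma Kpart_eq_image: "Kpart b n = Pair b ` {..<n}"
  unfolding Kpart_def by force

lemma card_Kpart: "card (Kpart b n) = n"
  unfolding Kpart_eq_image by (simp add: card_image inj_on_def)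

lemma bij_betw_Pair_Kpart: "bij_betw \<alpha> A {..<n} \<Longrightarrow> bij_betw (\<lambda>v. (b, \<alpha> v)) A (Kpart b n)"
  using bij_betw_trans[of \<alpha> A "{..<n}" "Pair b"] unfolding Kpart_eq_image
  by (simp add: bij_betw_imageI inj_on_def comp_def)

lemma Kbip_V_eq: "Kbip_V p q = Kpart False p \<union> Kpart True q"
  unfolding Kbip_V_def Kpart_def by force

lemma Kprism_V_eq: "Kprism_V p = Kpart False p \<union> Kpart True p"
  unfolding Kprism_V_def Kpart_def by (force simp: prod_eq_iff)

lemma Kbip_E_iff:
  assumes "x \<in> Kbip_V p q" "y \<in> Kbip_V p q"
  shows "{x, y} \<in> Kbip_E p q \<longleftrightarrow> fst x \<noteq> fst y"
  using assms unfolding Kbip_E_def Kbip_V_def by (auto simp: doubleton_eq_iff)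

lemma Kprism_E_iff:
  assumes "x \<in> Kprism_V p" "y \<in> Kprism_V p"
  shows "{x, y} \<in> Kprism_E p \<longleftrightarrow> x \<noteq> y \<and> (fst x = fst y \<or> snd x = snd y)"
proof -
  obtain b i c j where "x = (b, i)" "y = (c, j)" "i < p" "j < p"
    using assms unfolding Kprism_V_def by blast
  then show ?thesis unfolding Kprism_E_def by (cases b; cases c) (auto simp: doubleton_eq_iff)
qed

lemma simple_graph_Kbip: "simple_graph (Kbip_V p q) (Kbip_E p q)"
  unfolding simple_graph_def
proof
  show "finite (Kbip_V p q)"
    by (rule finite_subset[of _ "UNIV \<times> {..<max p q}"]) (auto simp: Kbip_V_def)
  show "\<forall>e\<in>Kbip_E p q. e \<subseteq> Kbip_V p q \<and> card e = 2"
    unfolding Kbip_E_def by (auto simp: Kbip_V_def)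
qed

lemma simple_graph_Kprism: "simple_graph (Kprism_V p) (Kprism_E p)"
  unfolding simple_graph_def
proof
  show "finite (Kprism_V p)"
    by (rule finite_subset[of _ "UNIV \<times> {..<p}"]) (auto simp: Kprism_V_def)
  show "\<forall>e\<in>Kprism_E p. e \<subseteq> Kprism_V p \<and> card e = 2"
  proof
    fix e assume "e \<in> Kprism_E p"
    then show "e \<subseteq> Kprism_V p \<and> card e = 2"
      unfolding Kprism_E_def by (elim UnE CollectE exE conjE) (auto simp: Kprism_V_def)
  qed
qed

lemma no_isolated_Kbip:
  assumes "1 \<le> p" "1 \<le> q"
  shows "no_isolated (Kbip_V p q) (Kbip_E p q)"
  unfolding no_isolated_def
proof
  fix v assume v: "v \<in> Kbip_V p q"
  have "(\<not> fst v, 0) \<in> Kbip_V p q" using assms unfolding Kbip_V_def by (cases "fst v") auto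
  then show "\<exists>u. {u, v} \<in> Kbip_E p q" using Kbip_E_iff[OF _ v] by fastforce
qed

lemma complete_bipartite_on_Kbip:
  "complete_bipartite_on (Kbip_V p q) (Kbip_E p q) (Kpart False p) (Kpart True q)"
  unfolding complete_bipartite_on_def using Kbip_E_iff by (auto simp: Kbip_V_eq Kpart_def)

lemma prism_on_Kprism: "prism_on (Kprism_E p) (Kpart False p) (Kpart True p) (\<lambda>x. (False, snd x))"
  unfolding prism_on_def
proof (intro conjI)
  show "bij_betw (\<lambda>x. (False, snd x)) (Kpart True p) (Kpart False p)"
    by (rule bij_betw_imageI) (auto simp: inj_on_def Kpart_def image_iff prod_eq_iff)
qed (use Kprism_E_iff in \<open>auto simp: Kprism_V_eq Kpart_def prod_eq_iff\<close>)

lemma Kpart_ne_empty: "n \<noteq> 0 \<Longrightarrow> Kpart b n \<noteq> {}"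
  unfolding Kpart_eq_image by (simp add: lessThan_empty_iff)

lemma two_part_domination_Kbip:
  assumes "1 \<le> p" "1 \<le> q"
  shows "two_part_domination (Kbip_V p q) (Kbip_E p q) (Kpart False p) (Kpart True q)"
proof (rule two_part_domination_complete_bipartite)
  show "Kpart False p \<union> Kpart True q = Kbip_V p q" by (rule Kbip_V_eq[symmetric])
  show "Kpart False p \<inter> Kpart True q = {}" by (auto simp: Kpart_def)
  show "Kpart False p \<noteq> {}" "Kpart True q \<noteq> {}" using assms by (simp_all add: Kpart_ne_empty)
qed (rule simple_graph_Kbip, rule complete_bipartite_on_Kbip)

lemma two_part_domination_Kprism:
  assumes "1 \<le> p"
  shows "two_part_domination (Kprism_V p) (Kprism_E p) (Kpart False p) (Kpart True p)"
proof (rule two_part_domination_prism)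
  show "Kpart False p \<union> Kpart True p = Kprism_V p" by (rule Kprism_V_eq[symmetric])
  show "Kpart False p \<inter> Kpart True p = {}" by (auto simp: Kpart_def)
  show "Kpart False p \<noteq> {}" "Kpart True p \<noteq> {}" using assms by (simp_all add: Kpart_ne_empty)
qed (rule simple_graph_Kprism, rule prism_on_Kprism)

lemma graph_iso_Kbip:
  assumes partition: "A \<union> B = V" "A \<inter> B = {}" and "finite A" "finite B" "card A = p" "card B = q"
    and complete: "complete_bipartite_on V E A B"
  shows "graph_iso V E (Kbip_V p q) (Kbip_E p q)"
proof -
  obtain \<alpha> where \<alpha>: "bij_betw \<alpha> A {..<p}" using finite_same_card_bij[OF \<open>finite A\<close>] assms(5) by force
  obtain \<beta> where \<beta>: "bij_betw \<beta> B {..<q}" using finite_same_card_bij[OF \<open>finite B\<close>] assms(6) by force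
  define f where "f v = (if v \<in> A then (False, \<alpha> v) else (True, \<beta> v))" for v
  have "bij_betw f (A \<union> B) (Kpart False p \<union> Kpart True q)"
    unfolding f_def
    by (rule bij_betw_disjoint_Un[OF bij_betw_Pair_Kpart[OF \<alpha>] bij_betw_Pair_Kpart[OF \<beta>] partition(2)])
      (auto simp: Kpart_def)
  then have f: "bij_betw f V (Kbip_V p q)" using partition(1) by (simp add: Kbip_V_eq)
  have "{u, v} \<in> E \<longleftrightarrow> {f u, f v} \<in> Kbip_E p q" if "u \<in> V" "v \<in> V" for u v
  proof -
    have "{f u, f v} \<in> Kbip_E p q \<longleftrightarrow> fst (f u) \<noteq> fst (f v)"
      using Kbip_E_iff bij_betw_apply[OF f] that by blast
    then show ?thesis using complete that partition unfolding complete_bipartite_on_def f_def by auto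
  qed
  then show ?thesis using f unfolding graph_iso_def by blast
qed

lemma graph_iso_Kprism:
  assumes partition: "A \<union> B = V" "A \<inter> B = {}" and "finite A" "card A = p"
    and prism: "prism_on E A B m"
  shows "graph_iso V E (Kprism_V p) (Kprism_E p)"
proof -
  obtain \<alpha> where \<alpha>: "bij_betw \<alpha> A {..<p}" using finite_same_card_bij[OF \<open>finite A\<close>] assms(4) by force
  have m: "bij_betw m B A" using prism unfolding prism_on_def by blast
  define rep where "rep v = (if v \<in> A then v else m v)" for v
  define f where "f v = (if v \<in> A then (False, \<alpha> v) else (True, \<alpha> (m v)))" for v
  have "bij_betw f (A \<union> B) (Kpart False p \<union> Kpart True p)"
    unfolding f_def
    by (rule bij_betw_disjoint_Un[OF bij_betw_Pair_Kpart[OF \<alpha>]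
          bij_betw_Pair_Kpart[OF bij_betw_trans[OF m \<alpha>, unfolded comp_def]] partition(2)])
      (auto simp: Kpart_def)
  then have f: "bij_betw f V (Kprism_V p)" using partition(1) by (simp add: Kprism_V_eq)
  have rep: "rep v \<in> A" "f v = (v \<notin> A, \<alpha> (rep v))" if "v \<in> V" for v
    using that partition(1) bij_betw_apply[OF m] unfolding rep_def f_def by auto
  have adjacent: "{u, v} \<in> E \<longleftrightarrow> u \<noteq> v \<and> ((u \<in> A \<longleftrightarrow> v \<in> A) \<or> rep u = rep v)"
    if "u \<in> V" "v \<in> V" for u v
  proof -
    have m_eq: "m u = m v \<longleftrightarrow> u = v" if "u \<in> B" "v \<in> B" for u v
      using bij_betw_imp_inj_on[OF m] that inj_on_eq_iff by metis
    show ?thesis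
      using prism \<open>u \<in> V\<close> \<open>v \<in> V\<close> partition m_eq bij_betw_apply[OF m]
      unfolding prism_on_def rep_def by (auto simp: insert_commute)
  qed
  have "{u, v} \<in> E \<longleftrightarrow> {f u, f v} \<in> Kprism_E p" if "u \<in> V" "v \<in> V" for u v
  proof -
    have "{f u, f v} \<in> Kprism_E p \<longleftrightarrow> f u \<noteq> f v \<and> (fst (f u) = fst (f v) \<or> snd (f u) = snd (f v))"
      using Kprism_E_iff bij_betw_apply[OF f] that by blast
    moreover have "f u = f v \<longleftrightarrow> u = v" using bij_betw_imp_inj_on[OF f] that inj_on_eq_iff by metis
    moreover have "snd (f u) = snd (f v) \<longleftrightarrow> rep u = rep v"
      using rep[OF that(1)] rep[OF that(2)] bij_betw_imp_inj_on[OF \<alpha>] inj_on_eq_iff by (metis snd_conv)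
    ultimately show ?thesis using adjacent[OF that] rep[OF that(1)] rep[OF that(2)] by auto
  qed
  then show ?thesis using f unfolding graph_iso_def by blast
qed

lemma graph_iso_Kprism_2_Kbip_2_2: "graph_iso (Kprism_V 2) (Kprism_E 2) (Kbip_V 2 2) (Kbip_E 2 2)"
proof (rule graph_iso_Kbip)
  let ?A = "{(False, 0), (True, 1)} :: (bool \<times> nat) set" and ?B = "{(False, 1), (True, 0)}"
  have V: "Kprism_V 2 = {(False, 0), (False, 1), (True, 0), (True, 1)}"
    unfolding Kprism_V_def by (auto simp: less_2_cases_iff)
  show "?A \<union> ?B = Kprism_V 2" "?A \<inter> ?B = {}" "finite ?A" "finite ?B" "card ?A = 2" "card ?B = 2"
    unfolding V by auto
  show "complete_bipartite_on (Kprism_V 2) (Kprism_E 2) ?A ?B"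
    unfolding complete_bipartite_on_def
  proof (intro ballI)
    fix u v assume uv: "u \<in> Kprism_V 2" "v \<in> Kprism_V 2"
    then show "{u, v} \<in> Kprism_E 2 \<longleftrightarrow> (u \<in> ?A \<longleftrightarrow> v \<in> ?B)"
      unfolding Kprism_E_iff[OF uv] unfolding V by auto
  qed
qed

lemma graph_iso_tar_Kprism_tar_Kbip:
  assumes "1 \<le> p"
  shows "graph_iso (tar_vertices (Kprism_V p) (Kprism_E p)) (tar_edges (Kprism_V p) (Kprism_E p))
                   (tar_vertices (Kbip_V p p) (Kbip_E p p)) (tar_edges (Kbip_V p p) (Kbip_E p p))"
proof -
  have "two_part_domination (Kbip_V p p) (Kprism_E p) (Kpart False p) (Kpart True p)"
    using two_part_domination_Kprism[OF assms] by (simp add: Kprism_V_eq Kbip_V_eq)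
  then have "dominating (Kbip_V p p) (Kprism_E p) = dominating (Kbip_V p p) (Kbip_E p p)"
    using two_part_domination_same_dominating two_part_domination_Kbip[OF assms assms] by blast
  then have "tar_vertices (Kprism_V p) (Kprism_E p) = tar_vertices (Kbip_V p p) (Kbip_E p p)"
    "tar_edges (Kprism_V p) (Kprism_E p) = tar_edges (Kbip_V p p) (Kbip_E p p)"
    unfolding tar_vertices_def tar_edges_def by (simp_all add: Kprism_V_eq Kbip_V_eq)
  then show ?thesis using graph_iso_refl by metis
qed

lemma (in two_part_domination) iso_Kbip_or_Kprism:
  assumes "card A = p" "card B = q"
  shows "graph_iso V E (Kbip_V p q) (Kbip_E p q)
    \<or> (p = q \<and> 3 \<le> p \<and> graph_iso V E (Kprism_V p) (Kprism_E p))"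
  using complete_bipartite_or_prism
proof
  assume "complete_bipartite_on V E A B"
  then have "graph_iso V E (Kbip_V p q) (Kbip_E p q)"
    using graph_iso_Kbip partition(1,2) finite_part two_part_domination.finite_part[OF swap] assms
    by blast
  then show ?thesis ..
next
  assume "2 \<le> card A \<and> (\<exists>m. prism_on E A B m)"
  then obtain m where "2 \<le> p" and prism: "prism_on E A B m" using assms(1) by blast
  then have "bij_betw m B A" unfolding prism_on_def by blast
  then have "p = q" using bij_betw_same_card assms by metis
  have iso: "graph_iso V E (Kprism_V p) (Kprism_E p)"
    by (rule graph_iso_Kprism[OF partition(1,2) finite_part assms(1) prism])
  show ?thesis
  proof (cases "3 \<le> p")
    case False
    then have "p = 2" "q = 2" using \<open>2 \<le> p\<close> \<open>p = q\<close> by auto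
    then show ?thesis using graph_iso_trans[OF iso] graph_iso_Kprism_2_Kbip_2_2 by simp
  qed (use iso \<open>p = q\<close> in blast)
qed

lemma tar_iso_Kbip_imp_iso_Kbip_or_Kprism:
  assumes "1 \<le> p" "1 \<le> q" and G: "simple_graph V E" "no_isolated V E"
    and iso: "graph_iso (tar_vertices V E) (tar_edges V E)
                        (tar_vertices (Kbip_V p q) (Kbip_E p q)) (tar_edges (Kbip_V p q) (Kbip_E p q))"
  shows "graph_iso V E (Kbip_V p q) (Kbip_E p q)
    \<or> (p = q \<and> 3 \<le> p \<and> graph_iso V E (Kprism_V p) (Kprism_E p))"
proof -
  obtain \<sigma> where \<sigma>: "bij_betw \<sigma> V (Kbip_V p q)"
    and dominating: "\<And>S. S \<subseteq> V \<Longrightarrow> dominating V E S \<longleftrightarrow> dominating (Kbip_V p q) (Kbip_E p q) (\<sigma> ` S)"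
    using tar_iso_imp_dominating_bij[OF G simple_graph_Kbip no_isolated_Kbip[OF assms(1,2)] iso] by blast
  define A where "A = {v \<in> V. \<sigma> v \<in> Kpart False p}"
  define B where "B = {v \<in> V. \<sigma> v \<in> Kpart True q}"
  interpret two_part_domination V E A B
    unfolding A_def B_def
    by (rule two_part_domination_pullback[OF G(1) \<sigma> dominating two_part_domination_Kbip[OF assms(1,2)]])
  have "bij_betw \<sigma> A (Kpart False p)" "bij_betw \<sigma> B (Kpart True q)"
    unfolding A_def B_def by (rule bij_betw_preimage[OF \<sigma>], simp add: Kbip_V_eq)+
  then have "card A = p" "card B = q" using bij_betw_same_card card_Kpart by metis+
  then show ?thesis by (rule iso_Kbip_or_Kprism)
qed

theorem proposition3p3:
  fixes p q :: nat
  assumes "1 \<le> p" and "p \<le> q"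
  shows "(\<forall>(V :: 'a set) (E :: 'a set set).
            simple_graph V E \<and> no_isolated V E \<and>
            graph_iso (tar_vertices V E) (tar_edges V E)
                      (tar_vertices (Kbip_V p q) (Kbip_E p q)) (tar_edges (Kbip_V p q) (Kbip_E p q))
          \<longrightarrow> (if q = p \<and> p \<ge> 3
               then graph_iso V E (Kbip_V p q) (Kbip_E p q) \<or> graph_iso V E (Kprism_V p) (Kprism_E p)
               else graph_iso V E (Kbip_V p q) (Kbip_E p q)))
       \<and> (q = p \<and> p \<ge> 3 \<longrightarrow>
            graph_iso (tar_vertices (Kprism_V p) (Kprism_E p)) (tar_edges (Kprism_V p) (Kprism_E p))
                      (tar_vertices (Kbip_V p p) (Kbip_E p p)) (tar_edges (Kbip_V p p) (Kbip_E p p)))"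
proof (intro conjI allI impI, goal_cases)
  case (1 V E)
  then have "graph_iso V E (Kbip_V p q) (Kbip_E p q)
      \<or> (p = q \<and> 3 \<le> p \<and> graph_iso V E (Kprism_V p) (Kprism_E p))"
    using tar_iso_Kbip_imp_iso_Kbip_or_Kprism[of p q V E] assms by simp
  then show ?case by auto
next
  case 2
  then show ?case using graph_iso_tar_Kprism_tar_Kbip by simp
qed

end
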